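(* Suppose $0<p<1$ and $q>0$, and let $(S,I)$ be an endemic equilibrium. Then $$I_{\max}\le\Big[\Big(\frac\beta\gamma\Big)_{\max}S_{\max}^q\Big]^{\frac1{1-p}}\qquad\text{and}\qquad S_{\max}\le\big[r_{\max}I_{\max}^{1-p}\big]^{1/q}.$$
   Context: Let $\Omega\subset\mathbb R^n$ be a bounded domain with smooth boundary and $\nu$ the outward unit normal on $\partial\Omega$. Let $\beta,\gamma$ be positive Hölder continuous functions on $\bar\Omega$, $N>0$, $q>0$, $0<p<1$, and $d_S,d_I>0$. Consider the system $$d_S\Delta S-\beta S^qI^p+\gamma I=0,\quad d_I\Delta I+\beta S^qI^p-\gamma I=0\ \text{ in }\Omega,\qquad \partial_\nu S=\partial_\nu I=0\ \text{ on }\partial\Omega,\qquad \int_\Omega(S+I)=N.$$ An endemic equilibrium is a nonnegative classical solution $(S,I)$ with $I\not\equiv0$. Define $r=\gamma/\beta$; for continuous $f$ on $\bar\Omega$, $f_{\max}=\max_{\bar\Omega}f$. *)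

theory Defs
  imports "HOL-Analysis.Analysis"
begin

definition partial :: "('a::euclidean_space \<Rightarrow> real) \<Rightarrow> 'a \<Rightarrow> 'a \<Rightarrow> real" where
  "partial f b x = frechet_derivative f (at x) b"

fun Ck_on :: "nat \<Rightarrow> 'a::euclidean_space set \<Rightarrow> ('a \<Rightarrow> real) \<Rightarrow> bool" where
  "Ck_on 0 S f = continuous_on S f"
| "Ck_on (Suc k) S f =
     ((\<forall>x\<in>S. f differentiable (at x)) \<and> (\<forall>b\<in>Basis. Ck_on k S (partial f b)))"

definition smooth_on :: "'a::euclidean_space set \<Rightarrow> ('a \<Rightarrow> real) \<Rightarrow> bool" where
  "smooth_on S f \<longleftrightarrow> (\<forall>k. Ck_on k S f)"

definition grad :: "('a::euclidean_space \<Rightarrow> real) \<Rightarrow> 'a \<Rightarrow> 'a" where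
  "grad f x = (\<Sum>b\<in>Basis. partial f b x *\<^sub>R b)"

definition laplacian :: "('a::euclidean_space \<Rightarrow> real) \<Rightarrow> 'a \<Rightarrow> real" where
  "laplacian f x = (\<Sum>b\<in>Basis. partial (partial f b) b x)"

text \<open>Bounded domain with smooth boundary, described by a smooth global
  defining function phi: Omega = {phi < 0}, with grad phi nonzero on {phi = 0}
  (which is then the boundary).\<close>
definition smooth_bounded_domain :: "'a::euclidean_space set \<Rightarrow> ('a \<Rightarrow> real) \<Rightarrow> bool" where
  "smooth_bounded_domain \<Omega> \<phi> \<longleftrightarrow>
     open \<Omega> \<and> connected \<Omega> \<and> bounded \<Omega> \<and> \<Omega> \<noteq> {} \<and>
     smooth_on UNIV \<phi> \<and> \<Omega> = {x. \<phi> x < 0} \<and> frontier \<Omega> = {x. \<phi> x = 0} \<and>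
     (\<forall>x. \<phi> x = 0 \<longrightarrow> grad \<phi> x \<noteq> 0)"

definition outward_normal :: "('a::euclidean_space \<Rightarrow> real) \<Rightarrow> 'a \<Rightarrow> 'a" where
  "outward_normal \<phi> x = (1 / norm (grad \<phi> x)) *\<^sub>R grad \<phi> x"

definition C1_closure :: "'a::euclidean_space set \<Rightarrow> ('a \<Rightarrow> real) \<Rightarrow> bool" where
  "C1_closure \<Omega> f \<longleftrightarrow>
     (\<forall>x\<in>closure \<Omega>. f differentiable (at x within closure \<Omega>)) \<and>
     (\<forall>b\<in>Basis. continuous_on (closure \<Omega>)
                  (\<lambda>x. frechet_derivative f (at x within closure \<Omega>) b))"

definition normal_deriv :: "'a::euclidean_space set \<Rightarrow> ('a \<Rightarrow> real) \<Rightarrow> ('a \<Rightarrow> real) \<Rightarrow> 'a \<Rightarrow> real" where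
  "normal_deriv \<Omega> \<phi> f x = frechet_derivative f (at x within closure \<Omega>) (outward_normal \<phi> x)"

definition holder_continuous_on :: "'a::euclidean_space set \<Rightarrow> ('a \<Rightarrow> real) \<Rightarrow> bool" where
  "holder_continuous_on S f \<longleftrightarrow>
     (\<exists>\<alpha> C. 0 < \<alpha> \<and> \<alpha> \<le> 1 \<and> (\<forall>x\<in>S. \<forall>y\<in>S. \<bar>f x - f y\<bar> \<le> C * dist x y powr \<alpha>))"

definition fmax :: "'a::euclidean_space set \<Rightarrow> ('a \<Rightarrow> real) \<Rightarrow> real" where
  "fmax \<Omega> f = Sup (f ` closure \<Omega>)"

definition endemic_equilibrium ::
  "'a::euclidean_space set \<Rightarrow> ('a \<Rightarrow> real) \<Rightarrow> real \<Rightarrow> real \<Rightarrow> ('a \<Rightarrow> real) \<Rightarrow> ('a \<Rightarrow> real)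
     \<Rightarrow> real \<Rightarrow> real \<Rightarrow> real \<Rightarrow> ('a \<Rightarrow> real) \<Rightarrow> ('a \<Rightarrow> real) \<Rightarrow> bool" where
  "endemic_equilibrium \<Omega> \<phi> dS dI \<beta> \<gamma> N p q S I \<longleftrightarrow>
     Ck_on 2 \<Omega> S \<and> Ck_on 2 \<Omega> I \<and> C1_closure \<Omega> S \<and> C1_closure \<Omega> I \<and>
     (\<forall>x\<in>closure \<Omega>. S x \<ge> 0 \<and> I x \<ge> 0) \<and> (\<exists>x\<in>closure \<Omega>. I x \<noteq> 0) \<and>
     (\<forall>x\<in>\<Omega>. dS * laplacian S x - \<beta> x * S x powr q * I x powr p + \<gamma> x * I x = 0) \<and>
     (\<forall>x\<in>\<Omega>. dI * laplacian I x + \<beta> x * S x powr q * I x powr p - \<gamma> x * I x = 0) \<and>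
     (\<forall>x\<in>frontier \<Omega>. normal_deriv \<Omega> \<phi> S x = 0 \<and> normal_deriv \<Omega> \<phi> I x = 0) \<and>
     ((\<lambda>x. S x + I x) has_integral N) \<Omega>"

end

theory Submission
  imports Defs
begin

(* Both bounds come from reading off the equations at maximum points.  If u solves
   laplacian u = G with homogeneous Neumann data and attains its maximum over the closure at x0,
   then G x0 <= 0: in the interior because the Laplacian is nonpositive at a maximum, and on
   the boundary because otherwise G > 0 near x0, u would have a strict maximum at x0 relative
   to an interior tangent ball (which exists since the boundary is smooth), and Hopf's lemma
   would give a nonzero normal derivative.  At a maximum of I this yields
   gamma I <= beta S^q I^p, i.e. I^(1-p) <= (beta/gamma) S^q; at a maximum of S it yields
   beta S^q I^p <= gamma I, and dividing by I^p requires I > 0 there.  That positivity is the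
   strong maximum principle for laplacian I <= c I, again with Hopf's lemma at the boundary. *)

section \<open>Second derivatives along coordinate directions\<close>

text \<open>Only the pure second derivative of \<open>t \<mapsto> u (z + t b)\<close> at \<open>0\<close> is needed, and asking for no
  more than its pointwise existence makes the notion stable under the combinations
  \<open>u + \<eta> v\<close> of the barrier argument.\<close>
definition has_second_deriv_along :: "('a::real_normed_vector \<Rightarrow> real) \<Rightarrow> 'a \<Rightarrow> 'a \<Rightarrow> real \<Rightarrow> bool" where
  "has_second_deriv_along u b z d \<longleftrightarrow>
     (\<exists>\<delta>>0. \<exists>g. (\<forall>t. \<bar>t\<bar> < \<delta> \<longrightarrow> ((\<lambda>s. u (z + s *\<^sub>R b)) has_real_derivative g t) (at t)) \<and>
                (g has_real_derivative d) (at 0))"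

lemma has_second_deriv_alongI:
  assumes "\<delta> > 0" "\<And>t. \<bar>t\<bar> < \<delta> \<Longrightarrow> ((\<lambda>s. u (z + s *\<^sub>R b)) has_real_derivative g t) (at t)"
    and "(g has_real_derivative d) (at 0)"
  shows "has_second_deriv_along u b z d"
  unfolding has_second_deriv_along_def using assms by blast

lemma second_derivative_nonpos_at_local_max:
  fixes g g' :: "real \<Rightarrow> real"
  assumes "\<delta> > 0" and max: "\<And>t. \<bar>t\<bar> < \<delta> \<Longrightarrow> g t \<le> g 0"
    and g': "\<And>t. \<bar>t\<bar> < \<delta> \<Longrightarrow> (g has_real_derivative g' t) (at t)"
    and g'': "(g' has_real_derivative d) (at 0)"
  shows "d \<le> 0"
proof (rule ccontr)
  assume "\<not> d \<le> 0"
  have "g' 0 = 0"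
    using DERIV_local_max[OF g'[of 0] \<open>\<delta> > 0\<close>] max \<open>\<delta> > 0\<close> by auto
  obtain \<epsilon> where "\<epsilon> > 0" and incr: "\<And>h. 0 < h \<Longrightarrow> h < \<epsilon> \<Longrightarrow> g' 0 < g' h"
    using DERIV_pos_inc_right[OF g''] \<open>\<not> d \<le> 0\<close> by force
  define t where "t = min \<epsilon> \<delta> / 2"
  have t: "0 < t" "t < \<epsilon>" "t < \<delta>"
    using \<open>\<epsilon> > 0\<close> \<open>\<delta> > 0\<close> by (auto simp: t_def)
  obtain s where s: "0 < s" "s < t" and mvt: "g t - g 0 = (t - 0) * g' s"
    using MVT2[of 0 t g g'] g' t by force
  have "g' s > 0"
    using incr[of s] \<open>g' 0 = 0\<close> s t by simp
  then have "g t > g 0"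
    using mvt mult_pos_pos[OF \<open>0 < t\<close>] by fastforce
  with max[of t] t show False by simp
qed

lemma has_second_deriv_along_nonpos_at_local_max:
  assumes "has_second_deriv_along u b z d" "\<epsilon> > 0"
    and max: "\<And>t. \<bar>t\<bar> < \<epsilon> \<Longrightarrow> u (z + t *\<^sub>R b) \<le> u z"
  shows "d \<le> 0"
proof -
  obtain \<delta> g where "\<delta> > 0"
    and g: "\<And>t. \<bar>t\<bar> < \<delta> \<Longrightarrow> ((\<lambda>s. u (z + s *\<^sub>R b)) has_real_derivative g t) (at t)"
    and g': "(g has_real_derivative d) (at 0)"
    using assms(1) unfolding has_second_deriv_along_def by blast
  show ?thesis
  proof (rule second_derivative_nonpos_at_local_max[of "min \<delta> \<epsilon>" "\<lambda>s. u (z + s *\<^sub>R b)" g d])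
    show "min \<delta> \<epsilon> > 0"
      using \<open>\<delta> > 0\<close> \<open>\<epsilon> > 0\<close> by simp
    show "u (z + t *\<^sub>R b) \<le> u (z + 0 *\<^sub>R b)" if "\<bar>t\<bar> < min \<delta> \<epsilon>" for t
      using max that by simp
    show "((\<lambda>s. u (z + s *\<^sub>R b)) has_real_derivative g t) (at t)" if "\<bar>t\<bar> < min \<delta> \<epsilon>" for t
      using g that by simp
  qed (fact g')
qed

lemma has_second_deriv_along_add_scaled:
  assumes "has_second_deriv_along u b z d" "has_second_deriv_along v b z e"
  shows "has_second_deriv_along (\<lambda>x. u x + c * v x) b z (d + c * e)"
proof -
  obtain \<delta>1 g1 where "\<delta>1 > 0"
    and u': "\<And>t. \<bar>t\<bar> < \<delta>1 \<Longrightarrow> ((\<lambda>s. u (z + s *\<^sub>R b)) has_real_derivative g1 t) (at t)"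
    and u'': "(g1 has_real_derivative d) (at 0)"
    using assms(1) unfolding has_second_deriv_along_def by blast
  obtain \<delta>2 g2 where "\<delta>2 > 0"
    and v': "\<And>t. \<bar>t\<bar> < \<delta>2 \<Longrightarrow> ((\<lambda>s. v (z + s *\<^sub>R b)) has_real_derivative g2 t) (at t)"
    and v'': "(g2 has_real_derivative e) (at 0)"
    using assms(2) unfolding has_second_deriv_along_def by blast
  show ?thesis
  proof (rule has_second_deriv_alongI[where \<delta>="min \<delta>1 \<delta>2" and g="\<lambda>t. g1 t + c * g2 t"])
    show "min \<delta>1 \<delta>2 > 0"
      using \<open>\<delta>1 > 0\<close> \<open>\<delta>2 > 0\<close> by simp
    show "((\<lambda>s. u (z + s *\<^sub>R b) + c * v (z + s *\<^sub>R b)) has_real_derivative g1 t + c * g2 t) (at t)"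
      if "\<bar>t\<bar> < min \<delta>1 \<delta>2" for t
      using that by (intro DERIV_add DERIV_cmult u' v') auto
    show "((\<lambda>t. g1 t + c * g2 t) has_real_derivative d + c * e) (at 0)"
      by (intro DERIV_add DERIV_cmult u'' v'')
  qed
qed

lemma has_second_deriv_along_uminus:
  assumes "has_second_deriv_along u b z d"
  shows "has_second_deriv_along (\<lambda>x. - u x) b z (- d)"
proof -
  obtain \<delta> g where "\<delta> > 0"
    and u': "\<And>t. \<bar>t\<bar> < \<delta> \<Longrightarrow> ((\<lambda>s. u (z + s *\<^sub>R b)) has_real_derivative g t) (at t)"
    and u'': "(g has_real_derivative d) (at 0)"
    using assms unfolding has_second_deriv_along_def by blast
  show ?thesis
  proof (rule has_second_deriv_alongI[where g="\<lambda>t. - g t"])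
    show "((\<lambda>s. - u (z + s *\<^sub>R b)) has_real_derivative - g t) (at t)" if "\<bar>t\<bar> < \<delta>" for t
      using u'[OF that] by (rule DERIV_minus)
    show "((\<lambda>t. - g t) has_real_derivative - d) (at 0)"
      using u'' by (rule DERIV_minus)
  qed (fact \<open>\<delta> > 0\<close>)
qed

lemma has_derivative_along_line:
  assumes "(f has_derivative f') (at (z + t *\<^sub>R b))"
  shows "((\<lambda>s. f (z + s *\<^sub>R b)) has_real_derivative f' b) (at t)"
proof -
  have "((\<lambda>s. z + s *\<^sub>R b) has_derivative (\<lambda>s. s *\<^sub>R b)) (at t)"
    by (auto intro!: derivative_eq_intros)
  from diff_chain_at[OF this assms]
  have "((\<lambda>s. f (z + s *\<^sub>R b)) has_derivative (\<lambda>s. f' (s *\<^sub>R b))) (at t)"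
    by (simp add: o_def)
  moreover have "(\<lambda>s. f' (s *\<^sub>R b)) = (*) (f' b)"
    using linear_scale[OF has_derivative_linear[OF assms]] by (auto simp: mult.commute)
  ultimately show ?thesis
    by (simp add: has_field_derivative_def)
qed

lemma Ck2_has_second_deriv_along:
  fixes u :: "'a::euclidean_space \<Rightarrow> real"
  assumes "open U" "Ck_on 2 U u" "z \<in> U" "b \<in> Basis"
  shows "has_second_deriv_along u b z (partial (partial u b) b z)"
proof -
  have diff: "\<And>x. x \<in> U \<Longrightarrow> u differentiable (at x)"
    and diff2: "\<And>x. x \<in> U \<Longrightarrow> partial u b differentiable (at x)"
    using assms(2,4) by (auto simp: numeral_2_eq_2)
  obtain \<delta> where "\<delta> > 0" "ball z \<delta> \<subseteq> U"
    using assms(1,3) open_contains_ball by blast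
  have "((\<lambda>s. u (z + s *\<^sub>R b)) has_real_derivative partial u b (z + t *\<^sub>R b)) (at t)"
    if "\<bar>t\<bar> < \<delta>" for t
  proof -
    have "z + t *\<^sub>R b \<in> ball z \<delta>"
      using that assms(4) by (simp add: dist_norm)
    then have "u differentiable (at (z + t *\<^sub>R b))"
      using \<open>ball z \<delta> \<subseteq> U\<close> diff by blast
    then show ?thesis
      unfolding partial_def frechet_derivative_works by (rule has_derivative_along_line)
  qed
  moreover have "((\<lambda>t. partial u b (z + t *\<^sub>R b)) has_real_derivative partial (partial u b) b z) (at 0)"
    using diff2[OF assms(3)] unfolding partial_def[of "partial u b"] frechet_derivative_works
    by (intro has_derivative_along_line) simp
  ultimately show ?thesis
    using \<open>\<delta> > 0\<close> by (intro has_second_deriv_alongI)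
qed

lemma laplacian_nonpos_at_local_max:
  fixes u :: "'a::euclidean_space \<Rightarrow> real"
  assumes "open U" "Ck_on 2 U u" "z \<in> U" "\<delta> > 0" and max: "\<forall>x\<in>ball z \<delta>. u x \<le> u z"
  shows "laplacian u z \<le> 0"
  unfolding laplacian_def
proof (intro sum_nonpos)
  fix b :: 'a assume "b \<in> Basis"
  show "partial (partial u b) b z \<le> 0"
  proof (rule has_second_deriv_along_nonpos_at_local_max)
    show "has_second_deriv_along u b z (partial (partial u b) b z)"
      using assms(1-3) \<open>b \<in> Basis\<close> by (rule Ck2_has_second_deriv_along)
    show "u (z + t *\<^sub>R b) \<le> u z" if "\<bar>t\<bar> < \<delta>" for t
    proof -
      have "z + t *\<^sub>R b \<in> ball z \<delta>"
        using that \<open>b \<in> Basis\<close> by (simp add: dist_norm)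
      then show ?thesis
        using max by blast
    qed
  qed (fact \<open>\<delta> > 0\<close>)
qed

lemma laplacian_nonpos_at_max:
  fixes u :: "'a::euclidean_space \<Rightarrow> real"
  assumes "open U" "Ck_on 2 U u" "z \<in> U" "\<forall>x\<in>U. u x \<le> u z"
  shows "laplacian u z \<le> 0"
proof -
  obtain \<delta> where "\<delta> > 0" "ball z \<delta> \<subseteq> U"
    using assms(1,3) open_contains_ball by blast
  with assms(4) show ?thesis
    by (intro laplacian_nonpos_at_local_max[OF assms(1-3) \<open>\<delta> > 0\<close>]) blast
qed

lemma sum_Basis_inner_square:
  fixes x :: "'a::euclidean_space"
  shows "(\<Sum>b\<in>Basis. (inner x b)\<^sup>2) = (norm x)\<^sup>2"
  by (subst power2_norm_eq_inner, subst euclidean_inner) (simp add: power2_eq_square)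

section \<open>Hopf's boundary point lemma\<close>

text \<open>For \<open>\<alpha>\<close> large the barrier satisfies \<open>\<Delta>v > c v\<close> on the annulus \<open>R/2 < |x - y| < R\<close>
  (by \<open>hopf_barrier_laplacian\<close> and \<open>hopf_barrier_exponent_pos\<close>), so adding a multiple of it
  to \<open>u\<close> cannot create an interior maximum; it vanishes on the outer sphere.\<close>

definition hopf_barrier :: "real \<Rightarrow> 'a::real_normed_vector \<Rightarrow> real \<Rightarrow> 'a \<Rightarrow> real" where
  "hopf_barrier \<alpha> y R x = exp (- \<alpha> * (norm (x - y))\<^sup>2) - exp (- \<alpha> * R\<^sup>2)"

lemma has_second_deriv_along_hopf_barrier:
  fixes y z b :: "'a::euclidean_space"
  assumes "b \<in> Basis"
  shows "has_second_deriv_along (hopf_barrier \<alpha> y R) b z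
           (exp (- \<alpha> * (norm (z - y))\<^sup>2) * (4 * \<alpha>\<^sup>2 * (inner (z - y) b)\<^sup>2 - 2 * \<alpha>))"
proof -
  define P Q where "P = (norm (z - y))\<^sup>2" and "Q = inner (z - y) b"
  have line: "hopf_barrier \<alpha> y R (z + s *\<^sub>R b) = exp (- \<alpha> * (P + 2 * s * Q + s\<^sup>2)) - exp (- \<alpha> * R\<^sup>2)" for s
  proof -
    have "(norm (z + s *\<^sub>R b - y))\<^sup>2 = inner ((z - y) + s *\<^sub>R b) ((z - y) + s *\<^sub>R b)"
      by (simp add: power2_norm_eq_inner algebra_simps)
    also have "\<dots> = inner (z - y) (z - y) + 2 * s * Q + s\<^sup>2 * inner b b"
      by (simp add: Q_def inner_add_left inner_add_right inner_commute algebra_simps power2_eq_square)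
    also have "\<dots> = P + 2 * s * Q + s\<^sup>2"
      using assms by (simp add: P_def power2_norm_eq_inner)
    finally show ?thesis
      by (simp add: hopf_barrier_def)
  qed
  show ?thesis
  proof (rule has_second_deriv_alongI[where \<delta>=1])
    show "((\<lambda>s. hopf_barrier \<alpha> y R (z + s *\<^sub>R b)) has_real_derivative
            exp (- \<alpha> * (P + 2 * t * Q + t\<^sup>2)) * (- \<alpha> * (2 * Q + 2 * t))) (at t)" for t
      unfolding line by (rule derivative_eq_intros refl | simp)+
    show "((\<lambda>t. exp (- \<alpha> * (P + 2 * t * Q + t\<^sup>2)) * (- \<alpha> * (2 * Q + 2 * t))) has_real_derivative
            exp (- \<alpha> * (norm (z - y))\<^sup>2) * (4 * \<alpha>\<^sup>2 * (inner (z - y) b)\<^sup>2 - 2 * \<alpha>)) (at 0)"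
      unfolding P_def[symmetric] Q_def[symmetric]
      by (rule derivative_eq_intros refl | simp)+ (simp add: algebra_simps power2_eq_square)
  qed simp
qed

lemma hopf_barrier_laplacian:
  fixes y z :: "'a::euclidean_space"
  shows "(\<Sum>b\<in>Basis. exp (- \<alpha> * (norm (z - y))\<^sup>2) * (4 * \<alpha>\<^sup>2 * (inner (z - y) b)\<^sup>2 - 2 * \<alpha>))
           = exp (- \<alpha> * (norm (z - y))\<^sup>2) * (4 * \<alpha>\<^sup>2 * (norm (z - y))\<^sup>2 - 2 * \<alpha> * real DIM('a))"
proof -
  have "(\<Sum>b\<in>Basis. exp (- \<alpha> * (norm (z - y))\<^sup>2) * (4 * \<alpha>\<^sup>2 * (inner (z - y) b)\<^sup>2 - 2 * \<alpha>))
      = exp (- \<alpha> * (norm (z - y))\<^sup>2) * (4 * \<alpha>\<^sup>2 * (\<Sum>b\<in>Basis. (inner (z - y) b)\<^sup>2) - 2 * \<alpha> * real DIM('a))"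
    by (simp add: sum_distrib_left sum_subtractf algebra_simps sum_distrib_right)
  then show ?thesis
    by (simp add: sum_Basis_inner_square)
qed

lemma hopf_barrier_exponent_pos:
  fixes \<alpha> R P c n :: real
  assumes "\<alpha> \<ge> 1" "\<alpha> * R\<^sup>2 \<ge> 2 * n + c + 1" "R\<^sup>2 < 4 * P" "c \<ge> 0"
  shows "4 * \<alpha>\<^sup>2 * P - 2 * \<alpha> * n - c > 0"
proof -
  have "4 * \<alpha>\<^sup>2 * P > \<alpha> * (\<alpha> * R\<^sup>2)"
    using assms(1,3) by (simp add: power2_eq_square)
  also have "\<alpha> * (\<alpha> * R\<^sup>2) \<ge> \<alpha> * (2 * n + c + 1)"
    using assms(1,2) by simp
  moreover have "\<alpha> * (c + 1) \<ge> c + 1"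
    using assms(1,4) by simp
  ultimately show ?thesis
    by (simp add: algebra_simps)
qed

lemma hopf_barrier_no_interior_max:
  fixes u :: "'a::euclidean_space \<Rightarrow> real" and u'' :: "'a \<Rightarrow> real" and y zs :: 'a
    and R c \<eta> \<alpha> M \<rho> :: real
  defines "w \<equiv> \<lambda>x. u x + \<eta> * hopf_barrier \<alpha> y R x"
  assumes "R > 0" "c \<ge> 0" "\<eta> > 0" "\<alpha> \<ge> 1" "\<alpha> * R\<^sup>2 \<ge> 2 * real DIM('a) + c + 1"
    and zs: "R / 2 < norm (zs - y)"
    and second_derivs: "\<And>b. b \<in> Basis \<Longrightarrow> has_second_deriv_along u b zs (u'' b)"
    and lap: "(\<Sum>b\<in>Basis. u'' b) \<ge> c * (u zs - M)"
    and "\<rho> > 0" and max: "\<And>x. x \<in> ball zs \<rho> \<Longrightarrow> w x \<le> w zs"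
  shows "w zs \<le> M"
proof (rule ccontr)
  assume "\<not> w zs \<le> M"
  define P where "P = (norm (zs - y))\<^sup>2"
  define E where "E = exp (- \<alpha> * P)"
  define V where "V b = E * (4 * \<alpha>\<^sup>2 * (inner (zs - y) b)\<^sup>2 - 2 * \<alpha>)" for b
  define K where "K = 4 * \<alpha>\<^sup>2 * P - 2 * \<alpha> * real DIM('a)"
  have "u'' b + \<eta> * V b \<le> 0" if b: "b \<in> Basis" for b
  proof (rule has_second_deriv_along_nonpos_at_local_max)
    show "has_second_deriv_along w b zs (u'' b + \<eta> * V b)"
      unfolding w_def V_def E_def P_def
      by (intro has_second_deriv_along_add_scaled second_derivs has_second_deriv_along_hopf_barrier b)
    show "w (zs + t *\<^sub>R b) \<le> w zs" if "\<bar>t\<bar> < \<rho>" for t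
    proof -
      have "zs + t *\<^sub>R b \<in> ball zs \<rho>"
        using that b by (simp add: dist_norm)
      then show ?thesis
        by (rule max)
    qed
  qed (fact \<open>\<rho> > 0\<close>)
  then have "(\<Sum>b\<in>Basis. u'' b + \<eta> * V b) \<le> 0"
    by (intro sum_nonpos)
  moreover have "(\<Sum>b\<in>Basis. u'' b + \<eta> * V b) = (\<Sum>b\<in>Basis. u'' b) + \<eta> * (\<Sum>b\<in>Basis. V b)"
    by (simp add: sum.distrib sum_distrib_left)
  moreover have "(\<Sum>b\<in>Basis. V b) = E * K"
    unfolding V_def E_def K_def P_def by (rule hopf_barrier_laplacian)
  moreover have "c * (u zs - M) \<ge> c * (- \<eta> * E)"
  proof (rule mult_left_mono)
    have "hopf_barrier \<alpha> y R zs \<le> E"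
      by (simp add: hopf_barrier_def E_def P_def)
    then have "\<eta> * hopf_barrier \<alpha> y R zs \<le> \<eta> * E"
      using \<open>\<eta> > 0\<close> by simp
    then show "u zs - M \<ge> - \<eta> * E"
      using \<open>\<not> w zs \<le> M\<close> unfolding w_def by linarith
  qed (fact \<open>c \<ge> 0\<close>)
  ultimately have "\<eta> * E * (K - c) \<le> 0"
    using lap by (simp add: algebra_simps)
  moreover have "K - c > 0"
    unfolding K_def
  proof (rule hopf_barrier_exponent_pos)
    show "R\<^sup>2 < 4 * P"
      using zs \<open>R > 0\<close> power_strict_mono[of "R / 2" "norm (zs - y)" 2] by (simp add: P_def power_divide)
  qed (use assms in auto)
  moreover have "\<eta> * E > 0"
    using \<open>\<eta> > 0\<close> by (simp add: E_def)
  ultimately show False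
    using mult_pos_pos[of "\<eta> * E" "K - c"] by linarith
qed

lemma ball_subset_annulus:
  fixes y z :: "'a::real_normed_vector"
  assumes "r1 < norm (z - y)" "norm (z - y) < r2"
  shows "ball z (min (norm (z - y) - r1) (r2 - norm (z - y))) \<subseteq> ball y r2 - cball y r1"
proof
  fix x assume "x \<in> ball z (min (norm (z - y) - r1) (r2 - norm (z - y)))"
  then have "norm (x - z) < min (norm (z - y) - r1) (r2 - norm (z - y))"
    by (simp add: dist_norm norm_minus_commute)
  moreover have "norm (x - y) \<le> norm (x - z) + norm (z - y)"
    using norm_triangle_ineq[of "x - z" "z - y"] by simp
  moreover have "norm (z - y) \<le> norm (x - z) + norm (x - y)"
    using norm_triangle_ineq[of "z - x" "x - y"] by (simp add: norm_minus_commute)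
  ultimately show "x \<in> ball y r2 - cball y r1"
    by (auto simp: dist_norm norm_minus_commute)
qed

lemma hopf_barrier_le_one:
  assumes "\<alpha> \<ge> 0"
  shows "hopf_barrier \<alpha> y R x \<le> 1"
proof -
  have "exp (- \<alpha> * (norm (x - y))\<^sup>2) \<le> 1"
    using assms by simp
  then show ?thesis
    using exp_gt_zero[of "- \<alpha> * R\<^sup>2"] unfolding hopf_barrier_def by linarith
qed

lemma hopf_barrier_comparison:
  fixes u :: "'a::euclidean_space \<Rightarrow> real" and u'' :: "'a \<Rightarrow> 'a \<Rightarrow> real"
  assumes "R > 0" "c \<ge> 0" "\<eta> > 0" "\<alpha> \<ge> 1" "\<alpha> * R\<^sup>2 \<ge> 2 * real DIM('a) + c + 1"
    and cont: "continuous_on (cball y R) u"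
    and le: "\<And>z. z \<in> cball y R \<Longrightarrow> u z \<le> M"
    and inner_sphere: "\<And>z. z \<in> sphere y (R / 2) \<Longrightarrow> u z \<le> M - \<eta>"
    and second_derivs: "\<And>z b. z \<in> ball y R \<Longrightarrow> b \<in> Basis \<Longrightarrow> has_second_deriv_along u b z (u'' z b)"
    and lap: "\<And>z. z \<in> ball y R \<Longrightarrow> (\<Sum>b\<in>Basis. u'' z b) \<ge> c * (u z - M)"
    and z: "z \<in> cball y R - ball y (R / 2)"
  shows "u z + \<eta> * hopf_barrier \<alpha> y R z \<le> M"
proof -
  define A where "A = cball y R - ball y (R / 2)"
  define w where "w x = u x + \<eta> * hopf_barrier \<alpha> y R x" for x
  have "compact A"
    unfolding A_def by (intro compact_diff) auto
  moreover have "continuous_on A w"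
    unfolding w_def hopf_barrier_def A_def
    by (intro continuous_intros continuous_on_subset[OF cont]) auto
  ultimately obtain zs where "zs \<in> A" and zs_max: "\<And>x. x \<in> A \<Longrightarrow> w x \<le> w zs"
    using continuous_attains_sup[of A w] z unfolding A_def by blast
  have zs_dist: "R / 2 \<le> norm (zs - y)" "norm (zs - y) \<le> R"
    using \<open>zs \<in> A\<close> by (auto simp: A_def dist_norm norm_minus_commute)
  have "w zs \<le> M"
  proof (cases "norm (zs - y) = R")
    case True
    then show ?thesis
      using le[of zs] \<open>zs \<in> A\<close> by (simp add: w_def hopf_barrier_def A_def)
  next
    case outer: False
    show ?thesis
    proof (cases "norm (zs - y) = R / 2")
      case True
      then have "u zs \<le> M - \<eta>"
        by (intro inner_sphere) (simp add: dist_norm norm_minus_commute)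
      moreover have "hopf_barrier \<alpha> y R zs \<le> 1"
        using \<open>\<alpha> \<ge> 1\<close> by (intro hopf_barrier_le_one) simp
      then have "\<eta> * hopf_barrier \<alpha> y R zs \<le> \<eta>"
        using \<open>\<eta> > 0\<close> by (simp add: mult_le_cancel_left1)
      ultimately show ?thesis
        by (simp add: w_def)
    next
      case False
      define \<rho> where "\<rho> = min (norm (zs - y) - R / 2) (R - norm (zs - y))"
      have "\<rho> > 0"
        using zs_dist outer False by (simp add: \<rho>_def)
      have "ball zs \<rho> \<subseteq> A"
        using ball_subset_annulus[of "R / 2" zs y R] zs_dist outer False
        unfolding \<rho>_def A_def by auto
      have "zs \<in> ball y R"
        using zs_dist outer by (simp add: dist_norm norm_minus_commute)
      show ?thesis
        unfolding w_def
      proof (rule hopf_barrier_no_interior_max[where u''="u'' zs" and \<rho>=\<rho>])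
        show "R / 2 < norm (zs - y)"
          using zs_dist False by simp
        show "u x + \<eta> * hopf_barrier \<alpha> y R x \<le> u zs + \<eta> * hopf_barrier \<alpha> y R zs"
          if "x \<in> ball zs \<rho>" for x
          using zs_max[of x] that \<open>ball zs \<rho> \<subseteq> A\<close> by (auto simp: w_def)
      qed (use assms \<open>zs \<in> ball y R\<close> \<open>\<rho> > 0\<close> in auto)
    qed
  qed
  then show ?thesis
    using zs_max[of z] z by (simp add: w_def A_def)
qed

lemma has_derivative_bound_of_linear_decrease:
  fixes u :: "'a::real_normed_vector \<Rightarrow> real"
  assumes der: "(u has_derivative D) (at x0 within T)" and "\<tau> > 0"
    and decr: "\<And>t. 0 < t \<Longrightarrow> t < \<tau> \<Longrightarrow> x0 + t *\<^sub>R e \<in> T \<and> u (x0 + t *\<^sub>R e) \<le> u x0 - \<kappa> * t"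
  shows "D e \<le> - \<kappa>"
proof -
  define f where "f t = x0 + t *\<^sub>R e" for t :: real
  have "(f has_derivative (\<lambda>t. t *\<^sub>R e)) (at 0 within {0<..<\<tau>})"
    unfolding f_def by (auto intro!: derivative_eq_intros)
  moreover have "f ` {0<..<\<tau>} \<subseteq> T"
    using decr by (auto simp: f_def)
  then have "(u has_derivative D) (at (f 0) within f ` {0<..<\<tau>})"
    using has_derivative_subset[OF der] by (simp add: f_def)
  ultimately have "((u \<circ> f) has_derivative (\<lambda>t. D (t *\<^sub>R e))) (at 0 within {0<..<\<tau>})"
    by (auto dest: diff_chain_within simp: o_def)
  moreover have "(\<lambda>t. D (t *\<^sub>R e)) = (*) (D e)"
    using linear_scale[OF has_derivative_linear[OF der]] by (auto simp: mult.commute)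
  ultimately have "((\<lambda>t. u (f t)) has_real_derivative D e) (at 0 within {0<..<\<tau>})"
    by (simp add: has_field_derivative_def o_def)
  then have "((\<lambda>t. (u (f t) - u (f 0)) / (t - 0)) \<longlongrightarrow> D e) (at 0 within {0<..<\<tau>})"
    unfolding has_field_derivative_iff .
  moreover have "eventually (\<lambda>t. (u (f t) - u (f 0)) / (t - 0) \<le> - \<kappa>) (at 0 within {0<..<\<tau>})"
    unfolding eventually_at_filter
    by (auto intro!: always_eventually simp: f_def divide_le_eq dest: decr)
  moreover have "\<not> trivial_limit (at (0::real) within {0<..<\<tau>})"
    using islimpt_greaterThanLessThan1[OF \<open>\<tau> > 0\<close>] by (simp add: trivial_limit_within)
  ultimately show ?thesis
    by (rule tendsto_upperbound)
qed

lemma exp_diff_ge: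
  fixes a b :: real
  shows "exp b * (a - b) \<le> exp a - exp b"
proof -
  have "exp b * (1 + (a - b)) \<le> exp b * exp (a - b)"
    by (intro mult_left_mono exp_ge_add_one_self) simp
  then show ?thesis
    by (simp add: exp_diff algebra_simps)
qed

lemma compact_uniform_gap:
  fixes u :: "'a::topological_space \<Rightarrow> real"
  assumes "compact K" "continuous_on K u" "\<And>z. z \<in> K \<Longrightarrow> u z < M"
  obtains \<eta> where "\<eta> > 0" "\<And>z. z \<in> K \<Longrightarrow> u z \<le> M - \<eta>"
proof (cases "K = {}")
  case True
  then show ?thesis
    using that[of 1] by simp
next
  case False
  then obtain zm where "zm \<in> K" "\<And>z. z \<in> K \<Longrightarrow> u z \<le> u zm"
    using continuous_attains_sup[OF assms(1) False assms(2)] by blast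
  then show ?thesis
    using that[of "M - u zm"] assms(3) by force
qed

lemma hopf_barrier_ge_linear:
  assumes "norm (x - y) = (1 - t) * R" "\<alpha> \<ge> 0" "0 \<le> t" "t \<le> 1"
  shows "exp (- \<alpha> * R\<^sup>2) * (\<alpha> * R\<^sup>2 * t) \<le> hopf_barrier \<alpha> y R x"
proof -
  have "\<alpha> * R\<^sup>2 * t \<le> \<alpha> * R\<^sup>2 * t * (2 - t)"
    using mult_left_mono[of 1 "2 - t" "\<alpha> * R\<^sup>2 * t"] assms(2-4) by simp
  also have "\<dots> = - \<alpha> * ((1 - t) * R)\<^sup>2 - - \<alpha> * R\<^sup>2"
    by (simp add: algebra_simps power2_eq_square)
  finally have "exp (- \<alpha> * R\<^sup>2) * (\<alpha> * R\<^sup>2 * t) \<le> exp (- \<alpha> * R\<^sup>2) * (- \<alpha> * ((1 - t) * R)\<^sup>2 - - \<alpha> * R\<^sup>2)"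
    by (intro mult_left_mono) auto
  also have "\<dots> \<le> hopf_barrier \<alpha> y R x"
    unfolding hopf_barrier_def assms(1) by (rule exp_diff_ge)
  finally show ?thesis .
qed

lemma hopf_linear_decrease:
  fixes u :: "'a::euclidean_space \<Rightarrow> real" and u'' :: "'a \<Rightarrow> 'a \<Rightarrow> real"
  assumes "R > 0" "norm (x0 - y) = R" "c \<ge> 0"
    and cont: "continuous_on (cball y R) u"
    and less: "\<And>z. z \<in> ball y R \<Longrightarrow> u z < u x0"
    and second_derivs: "\<And>z b. z \<in> ball y R \<Longrightarrow> b \<in> Basis \<Longrightarrow> has_second_deriv_along u b z (u'' z b)"
    and lap: "\<And>z. z \<in> ball y R \<Longrightarrow> (\<Sum>b\<in>Basis. u'' z b) \<ge> c * (u z - u x0)"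
  obtains \<kappa> where "\<kappa> > 0"
    "\<And>t. 0 < t \<Longrightarrow> t < 1 / 2 \<Longrightarrow> x0 + t *\<^sub>R (y - x0) \<in> ball y R \<and> u (x0 + t *\<^sub>R (y - x0)) \<le> u x0 - \<kappa> * t"
proof -
  have le: "u z \<le> u x0" if "z \<in> cball y R" for z
  proof (rule continuous_le_on_closure[where S="ball y R"])
    show "continuous_on (closure (ball y R)) u" "z \<in> closure (ball y R)"
      using cont that \<open>R > 0\<close> by simp_all
  qed (use less in \<open>simp add: less_imp_le\<close>)
  have "continuous_on (sphere y (R / 2)) u"
    using cont by (rule continuous_on_subset) (use \<open>R > 0\<close> in auto)
  moreover have "u z < u x0" if "z \<in> sphere y (R / 2)" for z
    using less that \<open>R > 0\<close> by simp
  ultimately obtain \<eta> where "\<eta> > 0" and inner_sphere: "\<And>z. z \<in> sphere y (R / 2) \<Longrightarrow> u z \<le> u x0 - \<eta>"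
    using compact_uniform_gap[OF compact_sphere] by blast
  define \<alpha> where "\<alpha> = (2 * real DIM('a) + c + 1) / R\<^sup>2 + 1"
  have "\<alpha> \<ge> 1"
    using \<open>c \<ge> 0\<close> by (simp add: \<alpha>_def)
  have "\<alpha> * R\<^sup>2 = 2 * real DIM('a) + c + 1 + R\<^sup>2"
    using \<open>R > 0\<close> by (simp add: \<alpha>_def field_simps)
  then have \<alpha>_large: "\<alpha> * R\<^sup>2 \<ge> 2 * real DIM('a) + c + 1"
    by simp
  define \<kappa> where "\<kappa> = \<eta> * \<alpha> * R\<^sup>2 * exp (- \<alpha> * R\<^sup>2)"
  have "\<kappa> > 0"
    using \<open>\<eta> > 0\<close> \<open>\<alpha> \<ge> 1\<close> \<open>R > 0\<close> by (simp add: \<kappa>_def)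
  have "x0 + t *\<^sub>R (y - x0) \<in> ball y R \<and> u (x0 + t *\<^sub>R (y - x0)) \<le> u x0 - \<kappa> * t"
    if t: "0 < t" "t < 1 / 2" for t
  proof -
    define p where "p = x0 + t *\<^sub>R (y - x0)"
    have "p - y = (1 - t) *\<^sub>R (x0 - y)"
      by (simp add: p_def algebra_simps)
    then have norm_p: "norm (p - y) = (1 - t) * R"
      using t \<open>norm (x0 - y) = R\<close> by simp
    have "(1 - t) * R < R" "R / 2 \<le> (1 - t) * R"
      using mult_pos_pos[OF t(1) \<open>R > 0\<close>] mult_strict_right_mono[OF t(2) \<open>R > 0\<close>]
      by (simp_all add: algebra_simps)
    then have "p \<in> ball y R" "p \<in> cball y R - ball y (R / 2)"
      using norm_p t by (auto simp: dist_norm norm_minus_commute)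
    have "u p + \<eta> * hopf_barrier \<alpha> y R p \<le> u x0"
      using \<open>R > 0\<close> \<open>c \<ge> 0\<close> \<open>\<eta> > 0\<close> \<open>\<alpha> \<ge> 1\<close> \<alpha>_large cont le inner_sphere second_derivs lap
        \<open>p \<in> cball y R - ball y (R / 2)\<close>
      by (rule hopf_barrier_comparison)
    moreover have "\<eta> * (exp (- \<alpha> * R\<^sup>2) * (\<alpha> * R\<^sup>2 * t)) \<le> \<eta> * hopf_barrier \<alpha> y R p"
      using hopf_barrier_ge_linear[OF norm_p] \<open>\<alpha> \<ge> 1\<close> t \<open>\<eta> > 0\<close> by (intro mult_left_mono) auto
    ultimately show ?thesis
      using \<open>p \<in> ball y R\<close> by (simp add: p_def \<kappa>_def algebra_simps)
  qed
  with \<open>\<kappa> > 0\<close> that show ?thesis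
    by blast
qed

lemma hopf_lemma:
  fixes u :: "'a::euclidean_space \<Rightarrow> real" and u'' :: "'a \<Rightarrow> 'a \<Rightarrow> real"
  assumes "R > 0" "norm (x0 - y) = R" "c \<ge> 0"
    and "continuous_on (cball y R) u"
    and "\<And>z. z \<in> ball y R \<Longrightarrow> u z < u x0"
    and "\<And>z b. z \<in> ball y R \<Longrightarrow> b \<in> Basis \<Longrightarrow> has_second_deriv_along u b z (u'' z b)"
    and "\<And>z. z \<in> ball y R \<Longrightarrow> (\<Sum>b\<in>Basis. u'' z b) \<ge> c * (u z - u x0)"
    and der: "(u has_derivative D) (at x0 within T)" and "ball y R \<subseteq> T"
  shows "D (y - x0) < 0"
proof -
  obtain \<kappa> where "\<kappa> > 0" and decrease:
    "\<And>t. 0 < t \<Longrightarrow> t < 1 / 2 \<Longrightarrow> x0 + t *\<^sub>R (y - x0) \<in> ball y R \<and> u (x0 + t *\<^sub>R (y - x0)) \<le> u x0 - \<kappa> * t"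
    using hopf_linear_decrease[OF assms(1-7)] by blast
  have "D (y - x0) \<le> - \<kappa>"
    using \<open>ball y R \<subseteq> T\<close> decrease
    by (intro has_derivative_bound_of_linear_decrease[OF der, of "1 / 2"]) auto
  with \<open>\<kappa> > 0\<close> show ?thesis
    by simp
qed

lemma hopf_lemma_zero_minimum:
  fixes I :: "'a::euclidean_space \<Rightarrow> real"
  assumes "open U" "Ck_on 2 U I" "ball y R \<subseteq> U" "R > 0" "norm (x0 - y) = R" "c \<ge> 0"
    and cont: "continuous_on (cball y R) I"
    and pos: "\<And>z. z \<in> ball y R \<Longrightarrow> I z > 0" and "I x0 = 0"
    and super: "\<And>z. z \<in> ball y R \<Longrightarrow> laplacian I z \<le> c * I z"
    and der: "(I has_derivative D) (at x0 within T)" and "ball y R \<subseteq> T"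
  shows "D (y - x0) > 0"
proof -
  have "- D (y - x0) < 0"
  proof (rule hopf_lemma[where u="\<lambda>x. - I x" and u''="\<lambda>z b. - partial (partial I b) b z" and c=c])
    show "continuous_on (cball y R) (\<lambda>x. - I x)"
      using cont by (rule continuous_on_minus)
    show "- I z < - I x0" if "z \<in> ball y R" for z
      using pos[OF that] \<open>I x0 = 0\<close> by simp
    show "has_second_deriv_along (\<lambda>x. - I x) b z (- partial (partial I b) b z)"
      if "z \<in> ball y R" "b \<in> Basis" for z b
      using assms(1,2) \<open>ball y R \<subseteq> U\<close> that
      by (intro has_second_deriv_along_uminus Ck2_has_second_deriv_along) auto
    show "c * (- I z - - I x0) \<le> (\<Sum>b\<in>Basis. - partial (partial I b) b z)" if "z \<in> ball y R" for z
      using super[OF that] \<open>I x0 = 0\<close> by (simp add: laplacian_def sum_negf)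
    show "((\<lambda>x. - I x) has_derivative (\<lambda>h. - D h)) (at x0 within T)"
      using der by (rule has_derivative_minus)
  qed (use assms in auto)
  then show ?thesis
    by simp
qed

section \<open>Positivity of supersolutions\<close>

lemma Ck2_continuous_on:
  assumes "Ck_on 2 U u"
  shows "continuous_on U u"
  using assms by (auto simp: numeral_2_eq_2 intro!: continuous_at_imp_continuous_on
      differentiable_imp_continuous_within)

lemma supersolution_pos_on_sphere:
  fixes I :: "'a::euclidean_space \<Rightarrow> real"
  assumes U: "open U" and C2: "Ck_on 2 U I" and nonneg: "\<forall>x\<in>U. I x \<ge> 0" and "c \<ge> 0"
    and super: "\<forall>x\<in>U. laplacian I x \<le> c * I x"
    and "r > 0" "cball x r \<subseteq> U" and pos: "\<forall>w\<in>ball x r. I w > 0" and "x1 \<in> sphere x r"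
  shows "I x1 > 0"
proof (rule ccontr)
  assume "\<not> I x1 > 0"
  have "x1 \<in> U"
    using \<open>x1 \<in> sphere x r\<close> \<open>cball x r \<subseteq> U\<close> by auto
  then have "I x1 = 0"
    using nonneg \<open>\<not> I x1 > 0\<close> by force
  obtain D where der: "(I has_derivative D) (at x1)"
    using C2 \<open>x1 \<in> U\<close> by (auto simp: numeral_2_eq_2 differentiable_def)
  have "D = (\<lambda>h. 0)"
    using nonneg \<open>I x1 = 0\<close> by (intro differential_zero_maxmin[OF \<open>x1 \<in> U\<close> U der]) auto
  have "ball x r \<subseteq> U"
    using \<open>cball x r \<subseteq> U\<close> ball_subset_cball by blast
  have "D (x - x1) > 0"
  proof (rule hopf_lemma_zero_minimum[OF U C2 \<open>ball x r \<subseteq> U\<close> \<open>r > 0\<close> _ \<open>c \<ge> 0\<close> _ _ \<open>I x1 = 0\<close> _ der])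
    show "norm (x1 - x) = r"
      using \<open>x1 \<in> sphere x r\<close> by (simp add: dist_norm norm_minus_commute)
    show "continuous_on (cball x r) I"
      using Ck2_continuous_on[OF C2] \<open>cball x r \<subseteq> U\<close> by (rule continuous_on_subset)
  qed (use pos super \<open>ball x r \<subseteq> U\<close> in auto)
  with \<open>D = (\<lambda>h. 0)\<close> show False
    by simp
qed

text \<open>A zero of \<open>I\<close> nearest to a point where \<open>I > 0\<close> lies on the boundary of a ball on which
  \<open>I > 0\<close>, which \<open>supersolution_pos_on_sphere\<close> excludes.\<close>

lemma supersolution_zero_set_open:
  fixes I :: "'a::euclidean_space \<Rightarrow> real"
  assumes U: "open U" and C2: "Ck_on 2 U I" and nonneg: "\<forall>x\<in>U. I x \<ge> 0" and "c \<ge> 0"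
    and super: "\<forall>x\<in>U. laplacian I x \<le> c * I x"
  shows "open {x \<in> U. I x = 0}"
  unfolding open_contains_ball
proof (intro ballI)
  fix z assume "z \<in> {x \<in> U. I x = 0}"
  then obtain \<rho> where "\<rho> > 0" "cball z \<rho> \<subseteq> U" "I z = 0"
    using U open_contains_cball by blast
  have "I x = 0" if x: "x \<in> ball z (\<rho> / 2)" for x
  proof (rule ccontr)
    assume "I x \<noteq> 0"
    define Z where "Z = {w \<in> cball z \<rho>. I w = 0}"
    have "closed Z"
      unfolding Z_def using continuous_on_subset[OF Ck2_continuous_on[OF C2] \<open>cball z \<rho> \<subseteq> U\<close>]
      by (intro continuous_closed_preimage_constant) auto
    moreover have "z \<in> Z"
      using \<open>\<rho> > 0\<close> \<open>I z = 0\<close> by (simp add: Z_def)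
    ultimately obtain x1 where "x1 \<in> Z" and nearest: "\<And>w. w \<in> Z \<Longrightarrow> dist x x1 \<le> dist x w"
      using distance_attains_inf[of Z x] by blast
    define r where "r = dist x x1"
    have "r < \<rho> / 2"
      using nearest[OF \<open>z \<in> Z\<close>] x by (simp add: r_def dist_commute)
    have "r > 0"
      using \<open>x1 \<in> Z\<close> \<open>I x \<noteq> 0\<close> by (auto simp: r_def Z_def)
    have "cball x r \<subseteq> cball z \<rho>"
    proof
      fix w assume "w \<in> cball x r"
      then show "w \<in> cball z \<rho>"
        using dist_triangle[of z w x] x \<open>r < \<rho> / 2\<close> by simp
    qed
    have pos: "\<forall>w\<in>ball x r. I w > 0"
    proof
      fix w assume "w \<in> ball x r"
      with nearest[of w] have "w \<notin> Z"
        by (force simp: r_def)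
      moreover have "w \<in> cball z \<rho>"
        using \<open>w \<in> ball x r\<close> \<open>cball x r \<subseteq> cball z \<rho>\<close> ball_subset_cball by blast
      ultimately show "I w > 0"
        using nonneg \<open>cball z \<rho> \<subseteq> U\<close> by (force simp: Z_def)
    qed
    have "cball x r \<subseteq> U" "x1 \<in> sphere x r"
      using \<open>cball x r \<subseteq> cball z \<rho>\<close> \<open>cball z \<rho> \<subseteq> U\<close> by (auto simp: r_def)
    then have "I x1 > 0"
      by (rule supersolution_pos_on_sphere[OF U C2 nonneg \<open>c \<ge> 0\<close> super \<open>r > 0\<close> _ pos])
    with \<open>x1 \<in> Z\<close> show False
      by (simp add: Z_def)
  qed
  moreover have "ball z (\<rho> / 2) \<subseteq> cball z \<rho>"
    using \<open>\<rho> > 0\<close> by auto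
  ultimately have "ball z (\<rho> / 2) \<subseteq> {x \<in> U. I x = 0}"
    using \<open>cball z \<rho> \<subseteq> U\<close> by blast
  then show "\<exists>e>0. ball z e \<subseteq> {x \<in> U. I x = 0}"
    using \<open>\<rho> > 0\<close> by (intro exI[of _ "\<rho> / 2"]) auto
qed

lemma supersolution_pos:
  fixes I :: "'a::euclidean_space \<Rightarrow> real"
  assumes "open U" "connected U" "Ck_on 2 U I" "\<forall>x\<in>U. I x \<ge> 0" "c \<ge> 0"
    and "\<forall>x\<in>U. laplacian I x \<le> c * I x" and "\<exists>x\<in>U. I x \<noteq> 0"
  shows "\<forall>x\<in>U. I x > 0"
proof -
  have "openin (top_of_set U) {x \<in> U. I x = 0}"
    using supersolution_zero_set_open[OF assms(1,3-6)] by (auto simp: openin_open)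
  moreover have "closedin (top_of_set U) {x \<in> U. I x = 0}"
    using Ck2_continuous_on[OF assms(3)] by (rule continuous_closedin_preimage_constant)
  ultimately have "{x \<in> U. I x = 0} = {}"
    using \<open>connected U\<close> \<open>\<exists>x\<in>U. I x \<noteq> 0\<close> connected_clopen by blast
  with \<open>\<forall>x\<in>U. I x \<ge> 0\<close> show ?thesis
    by force
qed

section \<open>Interior balls in smooth domains\<close>

lemma frechet_derivative_eq_inner_grad:
  fixes f :: "'a::euclidean_space \<Rightarrow> real"
  assumes "f differentiable (at z)"
  shows "frechet_derivative f (at z) h = inner (grad f z) h"
proof -
  have "linear (frechet_derivative f (at z))"
    using assms by (rule linear_frechet_derivative)
  then have "frechet_derivative f (at z) h = (\<Sum>b\<in>Basis. inner h b * partial f b z)"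
    unfolding partial_def
    by (subst euclidean_representation[symmetric, of h]) (simp add: linear_sum linear_scale)
  also have "\<dots> = inner (grad f z) h"
    by (simp add: grad_def inner_sum_right inner_commute mult.commute)
  finally show ?thesis .
qed

lemma has_derivative_imp_local_lipschitz_at:
  fixes F :: "'a::real_normed_vector \<Rightarrow> 'b::real_normed_vector"
  assumes "(F has_derivative F') (at x0)"
  obtains L r where "r > 0" "L \<ge> 0" "\<And>z. norm (z - x0) < r \<Longrightarrow> norm (F z - F x0) \<le> L * norm (z - x0)"
proof -
  have "bounded_linear F'"
    using assms by (rule has_derivative_bounded_linear)
  then obtain K where K: "\<And>h. norm (F' h) \<le> norm h * K" "K > 0"
    using bounded_linear.pos_bounded by blast
  obtain r where "r > 0" and r: "\<And>z. norm (z - x0) < r \<Longrightarrow> norm (F z - F x0 - F' (z - x0)) \<le> 1 * norm (z - x0)"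
    using assms unfolding has_derivative_at_alt by (meson zero_less_one)
  have "norm (F z - F x0) \<le> (K + 1) * norm (z - x0)" if "norm (z - x0) < r" for z
  proof -
    have "norm (F z - F x0) \<le> norm (F z - F x0 - F' (z - x0)) + norm (F' (z - x0))"
      using norm_triangle_ineq[of "F z - F x0 - F' (z - x0)" "F' (z - x0)"] by simp
    also have "\<dots> \<le> 1 * norm (z - x0) + norm (z - x0) * K"
      using r[OF that] K(1) by (rule add_mono)
    finally show ?thesis
      by (simp add: algebra_simps)
  qed
  then show ?thesis
    using that[of r "K + 1"] \<open>r > 0\<close> \<open>K > 0\<close> by simp
qed

lemma Ck2_grad_local_lipschitz:
  fixes \<phi> :: "'a::euclidean_space \<Rightarrow> real"
  assumes "Ck_on 2 UNIV \<phi>"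
  obtains L r where "r > 0" "L \<ge> 0"
    "\<And>z. norm (z - x0) < r \<Longrightarrow> norm (grad \<phi> z - grad \<phi> x0) \<le> L * norm (z - x0)"
proof -
  have "\<And>b z. b \<in> Basis \<Longrightarrow> partial \<phi> b differentiable (at z)"
    using assms by (auto simp: numeral_2_eq_2)
  then have "grad \<phi> differentiable (at x0)"
    unfolding grad_def[abs_def] by (intro differentiable_sum differentiable_scaleR) auto
  then show ?thesis
    unfolding differentiable_def using has_derivative_imp_local_lipschitz_at that by metis
qed

lemma Ck2_quadratic_upper_bound:
  fixes \<phi> :: "'a::euclidean_space \<Rightarrow> real"
  assumes "Ck_on 2 UNIV \<phi>"
  obtains K r where "r > 0" "K \<ge> 0"
    "\<And>x. norm (x - x0) < r \<Longrightarrow> \<phi> x \<le> \<phi> x0 + inner (grad \<phi> x0) (x - x0) + K * (norm (x - x0))\<^sup>2"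
proof -
  have diff: "\<And>z. \<phi> differentiable (at z)"
    using assms by (auto simp: numeral_2_eq_2)
  obtain L r where "r > 0" "L \<ge> 0"
    and lip: "\<And>z. norm (z - x0) < r \<Longrightarrow> norm (grad \<phi> z - grad \<phi> x0) \<le> L * norm (z - x0)"
    using Ck2_grad_local_lipschitz[OF assms, of x0] by blast
  define D where "D z = frechet_derivative \<phi> (at z)" for z
  have D: "(\<phi> has_derivative D z) (at z)" for z
    using diff frechet_derivative_works unfolding D_def by blast
  have D_grad: "D z h = inner (grad \<phi> z) h" for z h
    unfolding D_def using diff by (rule frechet_derivative_eq_inner_grad)
  have "\<phi> x \<le> \<phi> x0 + inner (grad \<phi> x0) (x - x0) + L * (norm (x - x0))\<^sup>2" if x: "norm (x - x0) < r" for x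
  proof -
    define \<rho> where "\<rho> = norm (x - x0)"
    have "norm (\<phi> x - \<phi> x0 - D x0 (x - x0)) \<le> norm (x - x0) * (L * \<rho>)"
    proof (rule differentiable_bound_linearization[where S="cball x0 \<rho>" and f'=D])
      show "x0 + t *\<^sub>R (x - x0) \<in> cball x0 \<rho>" if "t \<in> {0..1}" for t
        using that by (simp add: dist_norm \<rho>_def mult_left_le_one_le)
      show "(\<phi> has_derivative D z) (at z within cball x0 \<rho>)" for z
        using D by (rule has_derivative_at_withinI)
      show "onorm (D z - D x0) \<le> L * \<rho>" if z: "z \<in> cball x0 \<rho>" for z
      proof (rule onorm_le)
        fix h :: 'a
        have "norm (z - x0) \<le> \<rho>"
          using z by (simp add: dist_norm norm_minus_commute)
        then have "norm (z - x0) < r"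
          using x by (simp add: \<rho>_def)
        then have "norm (grad \<phi> z - grad \<phi> x0) \<le> L * norm (z - x0)"
          by (rule lip)
        also have "\<dots> \<le> L * \<rho>"
          using \<open>norm (z - x0) \<le> \<rho>\<close> \<open>L \<ge> 0\<close> by (rule mult_left_mono)
        finally have "norm (grad \<phi> z - grad \<phi> x0) * norm h \<le> L * \<rho> * norm h"
          by (rule mult_right_mono) simp
        then show "norm ((D z - D x0) h) \<le> L * \<rho> * norm h"
          using Cauchy_Schwarz_ineq2[of "grad \<phi> z - grad \<phi> x0" h]
          by (simp add: D_grad inner_diff_left)
      qed
    qed (simp add: \<rho>_def)
    then show ?thesis
      by (simp add: D_grad \<rho>_def abs_le_iff power2_eq_square algebra_simps)
  qed
  then show ?thesis
    using that \<open>r > 0\<close> \<open>L \<ge> 0\<close> by blast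
qed

lemma ball_tangent_bounds:
  fixes \<nu> x x0 :: "'a::real_inner"
  assumes "norm \<nu> = 1" "x \<in> ball (x0 - R *\<^sub>R \<nu>) R"
  shows "(norm (x - x0))\<^sup>2 < - 2 * R * inner (x - x0) \<nu>" "norm (x - x0) < 2 * R"
proof -
  define h where "h = x - x0"
  have "norm (h + R *\<^sub>R \<nu>) < R"
    using assms(2) by (simp add: h_def dist_norm norm_minus_commute algebra_simps)
  then have "(norm (h + R *\<^sub>R \<nu>))\<^sup>2 < R\<^sup>2"
    by (simp add: power_strict_mono)
  moreover have "(norm (h + R *\<^sub>R \<nu>))\<^sup>2 = (norm h)\<^sup>2 + 2 * R * inner h \<nu> + R\<^sup>2"
    using assms(1)
    by (simp add: power2_norm_eq_inner inner_add_left inner_add_right inner_commute algebra_simps)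
      (simp add: power2_eq_square flip: power2_norm_eq_inner)
  ultimately show "(norm (x - x0))\<^sup>2 < - 2 * R * inner (x - x0) \<nu>"
    by (simp add: h_def)
  have "R > 0"
    using \<open>norm (h + R *\<^sub>R \<nu>) < R\<close> norm_ge_zero[of "h + R *\<^sub>R \<nu>"] by linarith
  then show "norm (x - x0) < 2 * R"
    using norm_triangle_ineq4[of "h + R *\<^sub>R \<nu>" "R *\<^sub>R \<nu>"] \<open>norm (h + R *\<^sub>R \<nu>) < R\<close> assms(1)
    by (simp add: h_def)
qed

lemma smooth_bounded_domain_interior_ball:
  fixes \<Omega> :: "'a::euclidean_space set"
  assumes dom: "smooth_bounded_domain \<Omega> \<phi>" and x0: "x0 \<in> frontier \<Omega>"
  obtains R0 where "R0 > 0" "\<And>R. 0 < R \<Longrightarrow> R \<le> R0 \<Longrightarrow> ball (x0 - R *\<^sub>R outward_normal \<phi> x0) R \<subseteq> \<Omega>"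
proof -
  have \<Omega>: "\<Omega> = {x. \<phi> x < 0}" and "\<phi> x0 = 0" and "grad \<phi> x0 \<noteq> 0"
    using dom x0 by (auto simp: smooth_bounded_domain_def)
  define g \<nu> where "g = norm (grad \<phi> x0)" and "\<nu> = outward_normal \<phi> x0"
  have "g > 0"
    using \<open>grad \<phi> x0 \<noteq> 0\<close> by (simp add: g_def)
  have grad_eq: "grad \<phi> x0 = g *\<^sub>R \<nu>"
    using \<open>g > 0\<close> by (simp add: g_def \<nu>_def outward_normal_def)
  have "norm \<nu> = 1"
    using \<open>g > 0\<close> by (simp add: g_def \<nu>_def outward_normal_def)
  have "Ck_on 2 UNIV \<phi>"
    using dom by (simp add: smooth_bounded_domain_def smooth_on_def)
  then obtain K r where "r > 0" "K \<ge> 0"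
    and taylor: "\<And>x. norm (x - x0) < r \<Longrightarrow> \<phi> x \<le> \<phi> x0 + inner (grad \<phi> x0) (x - x0) + K * (norm (x - x0))\<^sup>2"
    using Ck2_quadratic_upper_bound[of \<phi> x0] by blast
  define R0 where "R0 = min (r / 2) (g / (2 * (K + 1)))"
  have "R0 > 0"
    using \<open>r > 0\<close> \<open>g > 0\<close> \<open>K \<ge> 0\<close> by (simp add: R0_def)
  have "x \<in> \<Omega>" if R: "0 < R" "R \<le> R0" and x: "x \<in> ball (x0 - R *\<^sub>R \<nu>) R" for R x
  proof -
    define h where "h = x - x0"
    have ball_ineq: "(norm h)\<^sup>2 < - 2 * R * inner h \<nu>" and "norm h < 2 * R"
      using ball_tangent_bounds[OF \<open>norm \<nu> = 1\<close> x] by (simp_all add: h_def)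
    then have "norm h < r"
      using R by (simp add: R0_def)
    then have "\<phi> x \<le> g * inner h \<nu> + K * (norm h)\<^sup>2"
      using taylor[of x] \<open>\<phi> x0 = 0\<close> by (simp add: h_def grad_eq inner_commute)
    also have "\<dots> < g * (- (norm h)\<^sup>2 / (2 * R)) + K * (norm h)\<^sup>2"
    proof -
      have "inner h \<nu> < - (norm h)\<^sup>2 / (2 * R)"
        using ball_ineq R(1) by (simp add: field_simps)
      then have "g * inner h \<nu> < g * (- (norm h)\<^sup>2 / (2 * R))"
        using \<open>g > 0\<close> by (rule mult_strict_left_mono)
      then show ?thesis
        by simp
    qed
    also have "\<dots> = (K - g / (2 * R)) * (norm h)\<^sup>2"
      using R(1) by (simp add: field_simps)
    also have "\<dots> \<le> 0"
    proof (rule mult_nonpos_nonneg)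
      have "R * (2 * (K + 1)) \<le> g"
        using R \<open>K \<ge> 0\<close> by (simp add: R0_def field_simps)
      then show "K - g / (2 * R) \<le> 0"
        using R(1) by (simp add: field_simps)
    qed simp
    finally show "x \<in> \<Omega>"
      by (simp add: \<Omega>)
  qed
  then show ?thesis
    using that \<open>R0 > 0\<close> unfolding \<nu>_def by blast
qed

section \<open>Maximum principle under Neumann conditions\<close>

lemma smooth_bounded_domainD:
  assumes "smooth_bounded_domain \<Omega> \<phi>"
  shows "open \<Omega>" "connected \<Omega>" "bounded \<Omega>" "\<Omega> \<noteq> {}"
  using assms unfolding smooth_bounded_domain_def by blast+

lemma C1_closure_continuous_on:
  assumes "C1_closure \<Omega> f"
  shows "continuous_on (closure \<Omega>) f"
  using assms differentiable_imp_continuous_within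
  by (auto simp: C1_closure_def continuous_on_eq_continuous_within)

text \<open>Since \<open>y - x0\<close> is a negative multiple of the outward normal, \<open>D (y - x0) = 0\<close> is the
  Neumann condition at \<open>x0\<close>.\<close>

lemma neumann_boundary_interior_ball:
  fixes \<Omega> :: "'a::euclidean_space set"
  assumes dom: "smooth_bounded_domain \<Omega> \<phi>" and x0: "x0 \<in> frontier \<Omega>"
    and C1: "C1_closure \<Omega> u" and bc: "normal_deriv \<Omega> \<phi> u x0 = 0" and "\<epsilon> > 0"
  obtains R y D where "0 < R" "R \<le> \<epsilon>" "norm (x0 - y) = R" "ball y R \<subseteq> \<Omega>" "cball y R \<subseteq> closure \<Omega>"
    "(u has_derivative D) (at x0 within closure \<Omega>)" "D (y - x0) = 0"
proof -
  obtain R0 where "R0 > 0" and balls: "\<And>R. 0 < R \<Longrightarrow> R \<le> R0 \<Longrightarrow> ball (x0 - R *\<^sub>R outward_normal \<phi> x0) R \<subseteq> \<Omega>"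
    using smooth_bounded_domain_interior_ball[OF dom x0] by blast
  define R \<nu> where "R = min R0 \<epsilon>" and "\<nu> = outward_normal \<phi> x0"
  define y where "y = x0 - R *\<^sub>R \<nu>"
  have "R > 0" "R \<le> \<epsilon>"
    using \<open>R0 > 0\<close> \<open>\<epsilon> > 0\<close> by (auto simp: R_def)
  have "norm \<nu> = 1"
    using dom x0 by (auto simp: smooth_bounded_domain_def \<nu>_def outward_normal_def)
  then have "norm (x0 - y) = R"
    using \<open>R > 0\<close> by (simp add: y_def)
  have "ball y R \<subseteq> \<Omega>"
    using balls[of R] \<open>R > 0\<close> by (simp add: R_def y_def \<nu>_def)
  then have "cball y R \<subseteq> closure \<Omega>"
    using closure_mono[of "ball y R" \<Omega>] \<open>R > 0\<close> by simp
  define D where "D = frechet_derivative u (at x0 within closure \<Omega>)"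
  have "x0 \<in> closure \<Omega>"
    using x0 by (simp add: frontier_def)
  then have der: "(u has_derivative D) (at x0 within closure \<Omega>)"
    using C1 frechet_derivative_works unfolding C1_closure_def D_def by blast
  have "D (y - x0) = - R * D \<nu>"
    using linear_scale[OF has_derivative_linear[OF der], of "- R" \<nu>] by (simp add: y_def)
  also have "D \<nu> = 0"
    using bc by (simp add: D_def \<nu>_def normal_deriv_def)
  finally show ?thesis
    using that \<open>R > 0\<close> \<open>R \<le> \<epsilon>\<close> \<open>norm (x0 - y) = R\<close> \<open>ball y R \<subseteq> \<Omega>\<close> \<open>cball y R \<subseteq> closure \<Omega>\<close> der
    by simp
qed

lemma neumann_boundary_not_max:
  fixes \<Omega> :: "'a::euclidean_space set" and u :: "'a \<Rightarrow> real"
  assumes dom: "smooth_bounded_domain \<Omega> \<phi>" and C2: "Ck_on 2 \<Omega> u" and C1: "C1_closure \<Omega> u"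
    and "x0 \<in> frontier \<Omega>" and "normal_deriv \<Omega> \<phi> u x0 = 0" and "\<epsilon> > 0"
    and lap_pos: "\<And>z. z \<in> \<Omega> \<Longrightarrow> dist z x0 < \<epsilon> \<Longrightarrow> laplacian u z > 0"
  shows "\<exists>x\<in>closure \<Omega>. u x > u x0"
proof (rule ccontr)
  assume "\<not> (\<exists>x\<in>closure \<Omega>. u x > u x0)"
  then have max: "\<forall>x\<in>closure \<Omega>. u x \<le> u x0"
    by (simp add: not_less)
  have "open \<Omega>"
    using dom by (rule smooth_bounded_domainD)
  have "\<epsilon> / 2 > 0"
    using \<open>\<epsilon> > 0\<close> by simp
  with \<open>normal_deriv \<Omega> \<phi> u x0 = 0\<close> obtain R y D where "0 < R" "R \<le> \<epsilon> / 2" "norm (x0 - y) = R"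
    "ball y R \<subseteq> \<Omega>" "cball y R \<subseteq> closure \<Omega>" and der: "(u has_derivative D) (at x0 within closure \<Omega>)"
    and "D (y - x0) = 0"
    by (rule neumann_boundary_interior_ball[OF dom \<open>x0 \<in> frontier \<Omega>\<close> C1])
  have lap_ball: "laplacian u z > 0" if "z \<in> ball y R" for z
  proof (rule lap_pos)
    show "z \<in> \<Omega>"
      using that \<open>ball y R \<subseteq> \<Omega>\<close> by blast
    have "dist z x0 \<le> dist z y + dist y x0"
      by (rule dist_triangle)
    also have "\<dots> < \<epsilon>"
      using that \<open>norm (x0 - y) = R\<close> \<open>R \<le> \<epsilon> / 2\<close> by (simp add: dist_commute dist_norm)
    finally show "dist z x0 < \<epsilon>" .
  qed
  have "D (y - x0) < 0"
  proof (rule hopf_lemma[where u''="\<lambda>z b. partial (partial u b) b z" and c=0, OF \<open>0 < R\<close> \<open>norm (x0 - y) = R\<close>])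
    show "continuous_on (cball y R) u"
      using C1_closure_continuous_on[OF C1] \<open>cball y R \<subseteq> closure \<Omega>\<close> by (rule continuous_on_subset)
    show "u z < u x0" if "z \<in> ball y R" for z
    proof (rule ccontr)
      assume "\<not> u z < u x0"
      then have "\<forall>x\<in>\<Omega>. u x \<le> u z"
        using max closure_subset by force
      then have "laplacian u z \<le> 0"
        using that \<open>ball y R \<subseteq> \<Omega>\<close> by (intro laplacian_nonpos_at_max[OF \<open>open \<Omega>\<close> C2]) auto
      with lap_ball[OF that] show False
        by simp
    qed
    show "has_second_deriv_along u b z (partial (partial u b) b z)" if "z \<in> ball y R" "b \<in> Basis" for z b
      using that \<open>ball y R \<subseteq> \<Omega>\<close> by (intro Ck2_has_second_deriv_along[OF \<open>open \<Omega>\<close> C2]) auto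
    show "0 * (u z - u x0) \<le> (\<Sum>b\<in>Basis. partial (partial u b) b z)" if "z \<in> ball y R" for z
      using lap_ball[OF that] by (simp add: laplacian_def)
    show "ball y R \<subseteq> closure \<Omega>"
      using \<open>cball y R \<subseteq> closure \<Omega>\<close> by auto
  qed (simp_all add: der)
  with \<open>D (y - x0) = 0\<close> show False
    by simp
qed

lemma neumann_max_principle:
  fixes \<Omega> :: "'a::euclidean_space set" and u G :: "'a \<Rightarrow> real"
  assumes dom: "smooth_bounded_domain \<Omega> \<phi>"
    and C2: "Ck_on 2 \<Omega> u" and C1: "C1_closure \<Omega> u"
    and bc: "\<forall>x\<in>frontier \<Omega>. normal_deriv \<Omega> \<phi> u x = 0"
    and G: "continuous_on (closure \<Omega>) G" and eq: "\<forall>x\<in>\<Omega>. laplacian u x = G x"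
    and x0: "x0 \<in> closure \<Omega>" and max: "\<forall>x\<in>closure \<Omega>. u x \<le> u x0"
  shows "G x0 \<le> 0"
proof -
  have "open \<Omega>"
    using dom by (rule smooth_bounded_domainD)
  show ?thesis
  proof (cases "x0 \<in> \<Omega>")
    case True
    then have "laplacian u x0 \<le> 0"
      using max closure_subset by (intro laplacian_nonpos_at_max[OF \<open>open \<Omega>\<close> C2]) auto
    with eq True show ?thesis
      by simp
  next
    case False
    with x0 \<open>open \<Omega>\<close> have "x0 \<in> frontier \<Omega>"
      by (simp add: frontier_def interior_open)
    show ?thesis
    proof (rule ccontr)
      assume "\<not> G x0 \<le> 0"
      then obtain \<delta> where "\<delta> > 0"
        and \<delta>: "\<And>x. x \<in> closure \<Omega> \<Longrightarrow> dist x x0 < \<delta> \<Longrightarrow> dist (G x) (G x0) < G x0"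
        using G x0 unfolding continuous_on_iff by (meson not_le)
      have "laplacian u z > 0" if "z \<in> \<Omega>" "dist z x0 < \<delta>" for z
        using \<delta>[of z] that eq closure_subset by (auto simp: dist_real_def abs_less_iff)
      then obtain x where "x \<in> closure \<Omega>" "u x > u x0"
        using neumann_boundary_not_max[OF dom C2 C1 \<open>x0 \<in> frontier \<Omega>\<close> _ \<open>\<delta> > 0\<close>] bc \<open>x0 \<in> frontier \<Omega>\<close>
        by blast
      with max show False
        by force
    qed
  qed
qed

lemma neumann_supersolution_pos:
  fixes \<Omega> :: "'a::euclidean_space set" and I :: "'a \<Rightarrow> real"
  assumes dom: "smooth_bounded_domain \<Omega> \<phi>"
    and C2: "Ck_on 2 \<Omega> I" and C1: "C1_closure \<Omega> I"
    and bc: "\<forall>x\<in>frontier \<Omega>. normal_deriv \<Omega> \<phi> I x = 0"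
    and nonneg: "\<forall>x\<in>closure \<Omega>. I x \<ge> 0" and nonzero: "\<exists>x\<in>closure \<Omega>. I x \<noteq> 0"
    and "c \<ge> 0" and super: "\<forall>x\<in>\<Omega>. laplacian I x \<le> c * I x"
  shows "\<forall>x\<in>closure \<Omega>. I x > 0"
proof
  fix x0 assume "x0 \<in> closure \<Omega>"
  have "open \<Omega>" "connected \<Omega>"
    using smooth_bounded_domainD[OF dom] by simp_all
  have "\<exists>x\<in>\<Omega>. I x \<noteq> 0"
  proof (rule ccontr)
    assume "\<not> (\<exists>x\<in>\<Omega>. I x \<noteq> 0)"
    then have "I x = 0" if "x \<in> closure \<Omega>" for x
      using continuous_constant_on_closure[OF C1_closure_continuous_on[OF C1] _ that, of 0] by auto
    with nonzero show False
      by blast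
  qed
  moreover have "\<forall>x\<in>\<Omega>. I x \<ge> 0"
    using nonneg closure_subset by blast
  ultimately have pos: "\<forall>x\<in>\<Omega>. I x > 0"
    using supersolution_pos[OF \<open>open \<Omega>\<close> \<open>connected \<Omega>\<close> C2 _ \<open>c \<ge> 0\<close> super] by blast
  show "I x0 > 0"
  proof (rule ccontr)
    assume "\<not> I x0 > 0"
    then have "I x0 = 0"
      using nonneg \<open>x0 \<in> closure \<Omega>\<close> by force
    then have "x0 \<in> frontier \<Omega>"
      using pos \<open>x0 \<in> closure \<Omega>\<close> \<open>open \<Omega>\<close> by (auto simp: frontier_def interior_open)
    moreover have "normal_deriv \<Omega> \<phi> I x0 = 0"
      using bc \<open>x0 \<in> frontier \<Omega>\<close> by blast
    ultimately obtain R y D where "0 < R" "R \<le> 1" "norm (x0 - y) = R" "ball y R \<subseteq> \<Omega>"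
      "cball y R \<subseteq> closure \<Omega>" and der: "(I has_derivative D) (at x0 within closure \<Omega>)"
      and "D (y - x0) = 0"
      using zero_less_one by (rule neumann_boundary_interior_ball[OF dom _ C1])
    have "D (y - x0) > 0"
    proof (rule hopf_lemma_zero_minimum[OF \<open>open \<Omega>\<close> C2 \<open>ball y R \<subseteq> \<Omega>\<close> \<open>0 < R\<close> \<open>norm (x0 - y) = R\<close> \<open>c \<ge> 0\<close>
          _ _ \<open>I x0 = 0\<close> _ der])
      show "continuous_on (cball y R) I"
        using C1_closure_continuous_on[OF C1] \<open>cball y R \<subseteq> closure \<Omega>\<close> by (rule continuous_on_subset)
      show "ball y R \<subseteq> closure \<Omega>"
        using \<open>ball y R \<subseteq> \<Omega>\<close> closure_subset by blast
    qed (use pos super \<open>ball y R \<subseteq> \<Omega>\<close> in auto)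
    with \<open>D (y - x0) = 0\<close> show False
      by simp
  qed
qed

section \<open>Endemic equilibria\<close>

lemma holder_continuous_on_imp_continuous_on:
  assumes "holder_continuous_on S f"
  shows "continuous_on S f"
proof -
  obtain \<alpha> C where "0 < \<alpha>" and holder: "\<forall>x\<in>S. \<forall>y\<in>S. \<bar>f x - f y\<bar> \<le> C * dist x y powr \<alpha>"
    using assms unfolding holder_continuous_on_def by blast
  have "(f \<longlongrightarrow> f x) (at x within S)" if "x \<in> S" for x
  proof -
    have "((\<lambda>y. dist y x) \<longlongrightarrow> 0) (at x within S)"
      using tendsto_ident_at by (rule tendsto_dist_iff[THEN iffD1])
    then have "((\<lambda>y. dist y x powr \<alpha>) \<longlongrightarrow> 0) (at x within S)"
      by (rule tendsto_zero_powrI[OF _ tendsto_const _ \<open>0 < \<alpha>\<close>]) simp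
    then have bound_to_0: "((\<lambda>y. C * dist y x powr \<alpha>) \<longlongrightarrow> 0) (at x within S)"
      by (rule tendsto_mult_right_zero)
    have "eventually (\<lambda>y. norm (f y - f x) \<le> C * dist y x powr \<alpha>) (at x within S)"
      unfolding eventually_at_filter by (rule always_eventually) (use holder that in simp)
    then have "((\<lambda>y. f y - f x) \<longlongrightarrow> 0) (at x within S)"
      using bound_to_0 by (rule Lim_null_comparison)
    then show ?thesis
      unfolding LIM_zero_iff .
  qed
  then show ?thesis
    unfolding continuous_on_def by blast
qed

lemma fmax_ge:
  fixes f :: "'a::euclidean_space \<Rightarrow> real"
  assumes "bounded \<Omega>" "continuous_on (closure \<Omega>) f" "x \<in> closure \<Omega>"
  shows "f x \<le> fmax \<Omega> f"
  unfolding fmax_def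
proof (rule cSup_upper)
  show "bdd_above (f ` closure \<Omega>)"
    using assms(1,2) by (intro bounded_imp_bdd_above compact_imp_bounded compact_continuous_image)
      (simp_all add: compact_closure)
qed (use assms(3) in blast)

lemma fmax_attained:
  fixes f :: "'a::euclidean_space \<Rightarrow> real"
  assumes "bounded \<Omega>" "\<Omega> \<noteq> {}" "continuous_on (closure \<Omega>) f"
  obtains x0 where "x0 \<in> closure \<Omega>" "f x0 = fmax \<Omega> f"
proof -
  obtain x0 where "x0 \<in> closure \<Omega>" and "\<forall>x\<in>closure \<Omega>. f x \<le> f x0"
    using continuous_attains_sup[of "closure \<Omega>" f] assms by (auto simp: compact_closure)
  then have "f x0 = fmax \<Omega> f"
    unfolding fmax_def by (intro cSup_eq_maximum[symmetric]) auto
  with \<open>x0 \<in> closure \<Omega>\<close> that show ?thesis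
    by blast
qed

lemma le_powr_inverse:
  fixes x y e :: real
  assumes "x \<ge> 0" "e > 0" "x powr e \<le> y"
  shows "x \<le> y powr (1 / e)"
proof -
  have "(x powr e) powr (1 / e) \<le> y powr (1 / e)"
    using assms by (intro powr_mono2) auto
  then show ?thesis
    using assms(1,2) by (simp add: powr_powr)
qed

locale endemic_equilibrium_setting =
  fixes \<Omega> :: "'a::euclidean_space set" and \<phi> \<beta> \<gamma> S I :: "'a \<Rightarrow> real"
    and dS dI N p q :: real
  assumes dom: "smooth_bounded_domain \<Omega> \<phi>"
    and beta_pos: "\<forall>x\<in>closure \<Omega>. \<beta> x > 0" and beta_cont: "continuous_on (closure \<Omega>) \<beta>"
    and gamma_pos: "\<forall>x\<in>closure \<Omega>. \<gamma> x > 0" and gamma_cont: "continuous_on (closure \<Omega>) \<gamma>"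
    and dS_pos: "dS > 0" and dI_pos: "dI > 0" and p_pos: "p > 0" and q_pos: "q > 0"
    and equilibrium: "endemic_equilibrium \<Omega> \<phi> dS dI \<beta> \<gamma> N p q S I"
begin

lemma solution_regular: "Ck_on 2 \<Omega> S" "Ck_on 2 \<Omega> I" "C1_closure \<Omega> S" "C1_closure \<Omega> I"
  using equilibrium unfolding endemic_equilibrium_def by blast+

lemma solution_continuous: "continuous_on (closure \<Omega>) S" "continuous_on (closure \<Omega>) I"
  by (intro C1_closure_continuous_on solution_regular)+

lemma solution_nonneg: "\<forall>x\<in>closure \<Omega>. S x \<ge> 0" "\<forall>x\<in>closure \<Omega>. I x \<ge> 0"
  using equilibrium unfolding endemic_equilibrium_def by blast+

lemma solution_neumann: "\<forall>x\<in>frontier \<Omega>. normal_deriv \<Omega> \<phi> S x = 0" "\<forall>x\<in>frontier \<Omega>. normal_deriv \<Omega> \<phi> I x = 0"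
  using equilibrium unfolding endemic_equilibrium_def by blast+

lemma bounded_domain: "bounded \<Omega>" "\<Omega> \<noteq> {}"
  using smooth_bounded_domainD(3,4)[OF dom] .

definition reaction :: "'a \<Rightarrow> real" where
  "reaction x = \<beta> x * S x powr q * I x powr p - \<gamma> x * I x"

lemma solution_laplacian:
  "\<forall>x\<in>\<Omega>. laplacian S x = reaction x / dS" "\<forall>x\<in>\<Omega>. laplacian I x = - reaction x / dI"
  using equilibrium dS_pos dI_pos
  by (auto simp: endemic_equilibrium_def reaction_def field_simps)

lemma reaction_continuous: "continuous_on (closure \<Omega>) reaction"
proof -
  have "continuous_on (closure \<Omega>) (\<lambda>x. S x powr q)" "continuous_on (closure \<Omega>) (\<lambda>x. I x powr p)"
    using solution_continuous solution_nonneg p_pos q_pos by (auto intro!: continuous_on_powr')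
  then show ?thesis
    unfolding reaction_def
    by (intro continuous_on_diff continuous_on_mult beta_cont gamma_cont solution_continuous)
qed

lemma I_pos: "\<forall>x\<in>closure \<Omega>. I x > 0"
proof (rule neumann_supersolution_pos[OF dom solution_regular(2,4) solution_neumann(2) solution_nonneg(2)])
  show "\<exists>x\<in>closure \<Omega>. I x \<noteq> 0"
    using equilibrium unfolding endemic_equilibrium_def by blast
  obtain x0 where "x0 \<in> \<Omega>"
    using bounded_domain(2) by blast
  then show "fmax \<Omega> \<gamma> / dI \<ge> 0"
    using fmax_ge[OF bounded_domain(1) gamma_cont, of x0] gamma_pos dI_pos closure_subset
    by force
  show "\<forall>x\<in>\<Omega>. laplacian I x \<le> fmax \<Omega> \<gamma> / dI * I x"
  proof
    fix x assume "x \<in> \<Omega>"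
    then have "x \<in> closure \<Omega>"
      using closure_subset by blast
    have "\<gamma> x * I x \<le> fmax \<Omega> \<gamma> * I x"
      using fmax_ge[OF bounded_domain(1) gamma_cont \<open>x \<in> closure \<Omega>\<close>] solution_nonneg(2)
        \<open>x \<in> closure \<Omega>\<close> by (intro mult_right_mono) auto
    moreover have "\<beta> x * S x powr q * I x powr p \<ge> 0"
      using beta_pos \<open>x \<in> closure \<Omega>\<close> by (intro mult_nonneg_nonneg) auto
    ultimately have "- reaction x \<le> fmax \<Omega> \<gamma> * I x"
      by (simp add: reaction_def)
    then have "- reaction x / dI \<le> fmax \<Omega> \<gamma> * I x / dI"
      using dI_pos by (intro divide_right_mono) auto
    then show "laplacian I x \<le> fmax \<Omega> \<gamma> / dI * I x"
      using solution_laplacian(2) \<open>x \<in> \<Omega>\<close> by simp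
  qed
qed

lemma I_at_max:
  assumes "x0 \<in> closure \<Omega>" "\<forall>x\<in>closure \<Omega>. I x \<le> I x0"
  shows "I x0 powr (1 - p) \<le> \<beta> x0 / \<gamma> x0 * S x0 powr q"
proof -
  have "- reaction x0 / dI \<le> 0"
    by (rule neumann_max_principle[OF dom solution_regular(2,4) solution_neumann(2) _ solution_laplacian(2) assms])
      (use reaction_continuous dI_pos in \<open>auto intro!: continuous_intros\<close>)
  moreover have "I x0 > 0"
    using I_pos assms(1) by blast
  ultimately have "\<gamma> x0 * I x0 powr (1 - p) * I x0 powr p \<le> \<beta> x0 * S x0 powr q * I x0 powr p"
    using dI_pos by (simp add: reaction_def divide_le_0_iff mult.assoc powr_add[symmetric])
  then have "\<gamma> x0 * I x0 powr (1 - p) \<le> \<beta> x0 * S x0 powr q"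
    using \<open>I x0 > 0\<close> by simp
  then show ?thesis
    using gamma_pos assms(1) by (simp add: field_simps)
qed

lemma S_at_max:
  assumes "x0 \<in> closure \<Omega>" "\<forall>x\<in>closure \<Omega>. S x \<le> S x0"
  shows "S x0 powr q \<le> \<gamma> x0 / \<beta> x0 * I x0 powr (1 - p)"
proof -
  have "reaction x0 / dS \<le> 0"
    by (rule neumann_max_principle[OF dom solution_regular(1,3) solution_neumann(1) _ solution_laplacian(1) assms])
      (use reaction_continuous dS_pos in \<open>auto intro!: continuous_intros\<close>)
  moreover have "I x0 > 0"
    using I_pos assms(1) by blast
  ultimately have "\<beta> x0 * S x0 powr q * I x0 powr p \<le> \<gamma> x0 * I x0 powr (1 - p) * I x0 powr p"
    using dS_pos by (simp add: reaction_def divide_le_0_iff mult.assoc powr_add[symmetric])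
  then have "\<beta> x0 * S x0 powr q \<le> \<gamma> x0 * I x0 powr (1 - p)"
    using \<open>I x0 > 0\<close> by simp
  then show ?thesis
    using beta_pos assms(1) by (simp add: field_simps)
qed

lemma fmax_nonneg: "fmax \<Omega> S \<ge> 0" "fmax \<Omega> I \<ge> 0"
proof -
  obtain x0 where "x0 \<in> closure \<Omega>"
    using bounded_domain(2) closure_subset by blast
  then show "fmax \<Omega> S \<ge> 0" "fmax \<Omega> I \<ge> 0"
    using fmax_ge[OF bounded_domain(1) solution_continuous(1)]
      fmax_ge[OF bounded_domain(1) solution_continuous(2)] solution_nonneg
    by (meson order_trans)+
qed

lemma fmax_I_bound: "fmax \<Omega> I powr (1 - p) \<le> fmax \<Omega> (\<lambda>x. \<beta> x / \<gamma> x) * fmax \<Omega> S powr q"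
proof -
  obtain x0 where x0: "x0 \<in> closure \<Omega>" "I x0 = fmax \<Omega> I"
    using fmax_attained[OF bounded_domain solution_continuous(2)] .
  have ratio_cont: "continuous_on (closure \<Omega>) (\<lambda>x. \<beta> x / \<gamma> x)"
    using beta_cont gamma_cont gamma_pos by (auto intro!: continuous_on_divide)
  have "fmax \<Omega> I powr (1 - p) \<le> \<beta> x0 / \<gamma> x0 * S x0 powr q"
    using I_at_max[OF x0(1)] x0 fmax_ge[OF bounded_domain(1) solution_continuous(2)] by simp
  also have "\<dots> \<le> fmax \<Omega> (\<lambda>x. \<beta> x / \<gamma> x) * fmax \<Omega> S powr q"
  proof (rule mult_mono)
    show "\<beta> x0 / \<gamma> x0 \<le> fmax \<Omega> (\<lambda>x. \<beta> x / \<gamma> x)"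
      using fmax_ge[OF bounded_domain(1) ratio_cont x0(1)] by simp
    moreover have "\<beta> x0 / \<gamma> x0 > 0"
      using beta_pos gamma_pos x0(1) by simp
    ultimately show "fmax \<Omega> (\<lambda>x. \<beta> x / \<gamma> x) \<ge> 0"
      by linarith
    show "S x0 powr q \<le> fmax \<Omega> S powr q"
      using fmax_ge[OF bounded_domain(1) solution_continuous(1) x0(1)] solution_nonneg(1) x0(1) q_pos
      by (intro powr_mono2) auto
  qed simp
  finally show ?thesis .
qed

lemma fmax_S_bound: "fmax \<Omega> S powr q \<le> fmax \<Omega> (\<lambda>x. \<gamma> x / \<beta> x) * fmax \<Omega> I powr (1 - p)"
  if "p < 1"
proof -
  obtain x0 where x0: "x0 \<in> closure \<Omega>" "S x0 = fmax \<Omega> S"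
    using fmax_attained[OF bounded_domain solution_continuous(1)] .
  have ratio_cont: "continuous_on (closure \<Omega>) (\<lambda>x. \<gamma> x / \<beta> x)"
    using beta_cont gamma_cont beta_pos by (auto intro!: continuous_on_divide)
  have "fmax \<Omega> S powr q \<le> \<gamma> x0 / \<beta> x0 * I x0 powr (1 - p)"
    using S_at_max[OF x0(1)] x0 fmax_ge[OF bounded_domain(1) solution_continuous(1)] by simp
  also have "\<dots> \<le> fmax \<Omega> (\<lambda>x. \<gamma> x / \<beta> x) * fmax \<Omega> I powr (1 - p)"
  proof (rule mult_mono)
    show "\<gamma> x0 / \<beta> x0 \<le> fmax \<Omega> (\<lambda>x. \<gamma> x / \<beta> x)"
      using fmax_ge[OF bounded_domain(1) ratio_cont x0(1)] by simp
    moreover have "\<gamma> x0 / \<beta> x0 > 0"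
      using beta_pos gamma_pos x0(1) by simp
    ultimately show "fmax \<Omega> (\<lambda>x. \<gamma> x / \<beta> x) \<ge> 0"
      by linarith
    show "I x0 powr (1 - p) \<le> fmax \<Omega> I powr (1 - p)"
      using fmax_ge[OF bounded_domain(1) solution_continuous(2) x0(1)] solution_nonneg(2) x0(1) \<open>p < 1\<close>
      by (intro powr_mono2) auto
  qed simp
  finally show ?thesis .
qed

end

theorem lemma5p1:
  fixes \<Omega> :: "'a::euclidean_space set" and \<phi> \<beta> \<gamma> S I :: "'a \<Rightarrow> real"
    and dS dI N p q :: real
  assumes dom: "smooth_bounded_domain \<Omega> \<phi>"
    and beta: "\<forall>x\<in>closure \<Omega>. \<beta> x > 0" "holder_continuous_on (closure \<Omega>) \<beta>"
    and gamma: "\<forall>x\<in>closure \<Omega>. \<gamma> x > 0" "holder_continuous_on (closure \<Omega>) \<gamma>"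
    and N: "N > 0" and d: "dS > 0" "dI > 0"
    and p: "0 < p" "p < 1" and q: "q > 0"
    and EE: "endemic_equilibrium \<Omega> \<phi> dS dI \<beta> \<gamma> N p q S I"
  shows "fmax \<Omega> I \<le> (fmax \<Omega> (\<lambda>x. \<beta> x / \<gamma> x) * fmax \<Omega> S powr q) powr (1 / (1 - p)) \<and>
         fmax \<Omega> S \<le> (fmax \<Omega> (\<lambda>x. \<gamma> x / \<beta> x) * fmax \<Omega> I powr (1 - p)) powr (1 / q)"
proof -
  interpret endemic_equilibrium_setting \<Omega> \<phi> \<beta> \<gamma> S I dS dI N p q
    using dom beta gamma d p q EE holder_continuous_on_imp_continuous_on
    by unfold_locales auto
  show ?thesis
    using le_powr_inverse[OF fmax_nonneg(2) _ fmax_I_bound] le_powr_inverse[OF fmax_nonneg(1) q fmax_S_bound] p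
    by simp
qed

end
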